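(* Let $X$ have a pdf $f$ satisfying Conditions (A) and (B) below. Then $$\lim_{\delta\to0}\Big[\mathrm{AoI}(S_{\mathrm z},Q_{\mathrm{uni}}^\delta,F_{\mathrm s})-\tfrac32 H[Q_{\mathrm{uni}}^\delta(X)]\Big]=0.$$
   Context: Let $X$ be a real random variable with pdf $f$. Condition (A): $f$ is continuous and differentiable, and its support is a bounded interval $I$. Condition (B): $\int_I f\log_2^2 f\,dx$ and $-\int_I f\log_2 f\,dx$ exist and are finite. The uniform quantizer $Q_{\mathrm{uni}}^\delta$ partitions $I$ into consecutive cells of length $\delta$. Let $p_i$ be the probability that $X$ lies in cell $i$, and $H[Q_{\mathrm{uni}}^\delta(X)]=-\sum_ip_i\log_2p_i$. The real-valued Shannon code $F_{\mathrm s}$ assigns length $l_i=-\log_2p_i$ to cell $i$, and $L=l_i$ when $X$ is in cell $i$. Under the zero-wait sampler, $\mathrm{AoI}(S_{\mathrm z},Q_{\mathrm{uni}}^\delta,F_{\mathrm s})=\frac{E[L^2]}{2E[L]}+E[L]$. *)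

theory Defs
  imports "HOL-Analysis.Analysis"
begin

text \<open>Uniform quantizer of step delta on the support interval I = [a,b]:
  cells [a + k delta, a + (k+1) delta) intersected with [a,b], k = 0 .. N-1,
  where N = ceiling((b-a)/delta) (the last cell may be shorter).\<close>

definition uni_ncells :: "real \<Rightarrow> real \<Rightarrow> real \<Rightarrow> nat" where
  "uni_ncells a b \<delta> = nat \<lceil>(b - a) / \<delta>\<rceil>"

definition uni_cell :: "real \<Rightarrow> real \<Rightarrow> real \<Rightarrow> nat \<Rightarrow> real set" where
  "uni_cell a b \<delta> k = {a + real k * \<delta> ..< a + real (Suc k) * \<delta>} \<inter> {a..b}"

definition cell_prob :: "(real \<Rightarrow> real) \<Rightarrow> real \<Rightarrow> real \<Rightarrow> real \<Rightarrow> nat \<Rightarrow> real" where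
  "cell_prob f a b \<delta> k = integral (uni_cell a b \<delta> k) f"

definition quant_entropy :: "(real \<Rightarrow> real) \<Rightarrow> real \<Rightarrow> real \<Rightarrow> real \<Rightarrow> real" where
  "quant_entropy f a b \<delta> =
     - (\<Sum>k<uni_ncells a b \<delta>. cell_prob f a b \<delta> k * log 2 (cell_prob f a b \<delta> k))"

text \<open>Real-valued Shannon code: l_i = - log2 p_i; L = l_i when X lies in cell i.\<close>
definition shannon_len :: "(real \<Rightarrow> real) \<Rightarrow> real \<Rightarrow> real \<Rightarrow> real \<Rightarrow> nat \<Rightarrow> real" where
  "shannon_len f a b \<delta> k = - log 2 (cell_prob f a b \<delta> k)"

definition EL :: "(real \<Rightarrow> real) \<Rightarrow> real \<Rightarrow> real \<Rightarrow> real \<Rightarrow> real" where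
  "EL f a b \<delta> = (\<Sum>k<uni_ncells a b \<delta>. cell_prob f a b \<delta> k * shannon_len f a b \<delta> k)"

definition EL2 :: "(real \<Rightarrow> real) \<Rightarrow> real \<Rightarrow> real \<Rightarrow> real \<Rightarrow> real" where
  "EL2 f a b \<delta> = (\<Sum>k<uni_ncells a b \<delta>. cell_prob f a b \<delta> k * (shannon_len f a b \<delta> k)\<^sup>2)"

text \<open>AoI under the zero-wait sampler: E[L^2]/(2 E[L]) + E[L].\<close>
definition AoI_zw_uni_shannon :: "(real \<Rightarrow> real) \<Rightarrow> real \<Rightarrow> real \<Rightarrow> real \<Rightarrow> real" where
  "AoI_zw_uni_shannon f a b \<delta> = EL2 f a b \<delta> / (2 * EL f a b \<delta>) + EL f a b \<delta>"

end

theory Submission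
  imports Defs
begin

text \<open>A continuous density on a compact interval is bounded, say by \<open>M\<close>, so every cell has
  probability at most \<open>M \<delta>\<close>. Hence \<open>H = E[L] \<ge> -log\<^sub>2 (M \<delta>) \<rightarrow> \<infinity>\<close>, whereas the variance of
  \<open>L\<close> stays bounded: \<open>Var L \<le> E[(L + log\<^sub>2 \<delta>)\<^sup>2] = \<Sum>\<^sub>k \<delta> q\<^sub>k log\<^sub>2\<^sup>2 q\<^sub>k\<close> with \<open>q\<^sub>k = p\<^sub>k / \<delta> \<in> [0, M]\<close>,
  and \<open>q log\<^sub>2\<^sup>2 q\<close> is bounded on \<open>(0, M]\<close>. Since \<open>AoI - 3/2 H = Var L / (2 H)\<close>, the difference
  tends to \<open>0\<close>.\<close>

lemma mult_ln_squared_le: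
  fixes q :: real
  assumes q: "0 < q"
  shows "q * (ln q)\<^sup>2 \<le> 8 + 2 * q ^ 3"
proof -
  have s: "0 < sqrt q" using q by simp
  have upper: "ln q \<le> q" using ln_le_minus_one[OF q] by linarith
  have "ln (1 / sqrt q) \<le> 1 / sqrt q - 1" using ln_le_minus_one[of "1 / sqrt q"] s by simp
  moreover have "ln (1 / sqrt q) = - ln q / 2" using q s by (simp add: ln_div ln_sqrt)
  ultimately have lower: "- ln q \<le> 2 / sqrt q" by (simp add: field_simps)
  have "0 < 2 / sqrt q" using s by simp
  then have "\<bar>ln q\<bar> \<le> 2 / sqrt q + q" unfolding abs_le_iff using upper lower q by linarith
  then have "(ln q)\<^sup>2 \<le> (2 / sqrt q + q)\<^sup>2" by (metis abs_ge_zero power2_abs power_mono)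
  also have "\<dots> \<le> 2 * (2 / sqrt q)\<^sup>2 + 2 * q\<^sup>2" by (smt (verit) sum_squares_bound power2_sum)
  also have "(2 / sqrt q)\<^sup>2 = 4 / q" using q by (simp add: power_divide)
  finally have "q * (ln q)\<^sup>2 \<le> q * (8 / q + 2 * q\<^sup>2)" using q by (simp add: mult_left_mono)
  also have "\<dots> = 8 + 2 * q ^ 3" using q by (simp add: field_simps power2_eq_square power3_eq_cube)
  finally show ?thesis .
qed

lemma weighted_sq_dev_eq_variance_plus_bias:
  fixes p L :: "'a \<Rightarrow> real"
  assumes "sum p A = 1"
  shows "(\<Sum>k\<in>A. p k * (L k - c)\<^sup>2)
    = ((\<Sum>k\<in>A. p k * (L k)\<^sup>2) - (\<Sum>k\<in>A. p k * L k)\<^sup>2) + ((\<Sum>k\<in>A. p k * L k) - c)\<^sup>2"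
proof -
  have "(\<Sum>k\<in>A. p k * (L k - c)\<^sup>2)
      = (\<Sum>k\<in>A. p k * (L k)\<^sup>2) - 2 * c * (\<Sum>k\<in>A. p k * L k) + c\<^sup>2 * sum p A"
    by (simp add: power2_diff algebra_simps sum.distrib sum_subtractf sum_distrib_left
        sum_distrib_right)
  then show ?thesis using assms by (simp add: power2_diff)
qed

lemma weighted_variance_nonneg:
  fixes p L :: "'a \<Rightarrow> real"
  assumes "sum p A = 1" and "\<And>k. k \<in> A \<Longrightarrow> 0 \<le> p k"
  shows "0 \<le> (\<Sum>k\<in>A. p k * (L k)\<^sup>2) - (\<Sum>k\<in>A. p k * L k)\<^sup>2"
proof -
  have "0 \<le> (\<Sum>k\<in>A. p k * (L k - (\<Sum>k\<in>A. p k * L k))\<^sup>2)"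
    using assms(2) by (intro sum_nonneg) simp
  then show ?thesis using weighted_sq_dev_eq_variance_plus_bias[OF assms(1)] by simp
qed

lemma weighted_variance_le_sq_dev:
  fixes p L :: "'a \<Rightarrow> real"
  assumes "sum p A = 1"
  shows "(\<Sum>k\<in>A. p k * (L k)\<^sup>2) - (\<Sum>k\<in>A. p k * L k)\<^sup>2 \<le> (\<Sum>k\<in>A. p k * (L k - c)\<^sup>2)"
  using weighted_sq_dev_eq_variance_plus_bias[OF assms, of L c] by simp

lemma neg_log_max_le_entropy:
  fixes p :: "'a \<Rightarrow> real"
  assumes sum_one: "sum p A = 1" and p: "\<And>k. k \<in> A \<Longrightarrow> 0 \<le> p k \<and> p k \<le> m"
  shows "- log 2 m \<le> (\<Sum>k\<in>A. p k * - log 2 (p k))"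
proof -
  have "- log 2 m = sum p A * - log 2 m" using sum_one by simp
  also have "\<dots> = (\<Sum>k\<in>A. p k * - log 2 m)" by (rule sum_distrib_right)
  also have "\<dots> \<le> (\<Sum>k\<in>A. p k * - log 2 (p k))"
  proof (rule sum_mono)
    fix k assume k: "k \<in> A"
    show "p k * - log 2 m \<le> p k * - log 2 (p k)"
    proof (cases "p k = 0")
      case False
      then have "0 < p k" using p[OF k] by simp
      then show ?thesis using p[OF k] by (intro mult_left_mono) auto
    qed simp
  qed
  finally show ?thesis .
qed

lemma mult_log_ratio_squared_le:
  fixes p \<delta> M :: real
  assumes p: "0 \<le> p" "p \<le> M * \<delta>" and \<delta>: "0 < \<delta>"
  shows "p * (log 2 p - log 2 \<delta>)\<^sup>2 \<le> \<delta> * ((8 + 2 * M ^ 3) / (ln 2)\<^sup>2)"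
proof (cases "p = 0")
  case True
  have "0 \<le> M * \<delta>" using p by linarith
  then have "0 \<le> M" using \<delta> by (simp add: zero_le_mult_iff)
  then show ?thesis using True \<delta> by simp
next
  case False
  define q where "q = p / \<delta>"
  have q: "0 < q" "q \<le> M" using p \<delta> False by (auto simp: q_def field_simps)
  have "p * (log 2 p - log 2 \<delta>)\<^sup>2 = \<delta> * (q * (ln q)\<^sup>2) / (ln 2)\<^sup>2"
    using p \<delta> False by (simp add: q_def log_def ln_div diff_divide_distrib[symmetric] power_divide)
  also have "\<dots> \<le> \<delta> * (8 + 2 * M ^ 3) / (ln 2)\<^sup>2"
  proof -
    have "q * (ln q)\<^sup>2 \<le> 8 + 2 * M ^ 3"
      using mult_ln_squared_le[OF q(1)] power_mono[OF q(2), of 3] q(1) by linarith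
    then show ?thesis using \<delta> by (intro divide_right_mono mult_left_mono) auto
  qed
  finally show ?thesis by simp
qed

lemma shannon_length_variance_le:
  fixes p :: "'a \<Rightarrow> real" and M \<delta> :: real
  assumes sum_one: "sum p A = 1" and p: "\<And>k. k \<in> A \<Longrightarrow> 0 \<le> p k \<and> p k \<le> M * \<delta>"
    and \<delta>: "0 < \<delta>"
  shows "(\<Sum>k\<in>A. p k * (- log 2 (p k))\<^sup>2) - (\<Sum>k\<in>A. p k * - log 2 (p k))\<^sup>2
    \<le> card A * \<delta> * ((8 + 2 * M ^ 3) / (ln 2)\<^sup>2)"
proof -
  have "(\<Sum>k\<in>A. p k * (- log 2 (p k))\<^sup>2) - (\<Sum>k\<in>A. p k * - log 2 (p k))\<^sup>2
      \<le> (\<Sum>k\<in>A. p k * (- log 2 (p k) - - log 2 \<delta>)\<^sup>2)"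
    by (rule weighted_variance_le_sq_dev[OF sum_one])
  also have "\<dots> = (\<Sum>k\<in>A. p k * (log 2 (p k) - log 2 \<delta>)\<^sup>2)"
    by (simp add: power2_commute)
  also have "\<dots> \<le> (\<Sum>k\<in>A. \<delta> * ((8 + 2 * M ^ 3) / (ln 2)\<^sup>2))"
    using p \<delta> by (intro sum_mono mult_log_ratio_squared_le) auto
  finally show ?thesis by simp
qed

lemma has_integral_subset_spike:
  fixes f :: "'n::euclidean_space \<Rightarrow> 'a::banach"
  assumes "(f has_integral I) S" and "T \<subseteq> S" and "S - T \<subseteq> {c}"
  shows "(f has_integral I) T"
proof (rule has_integral_spike_set_eq[THEN iffD1, OF _ _ assms(1)])
  show "negligible {x \<in> S - T. f x \<noteq> 0}"
    by (rule negligible_subset[of "{c}"]) (use assms(3) in auto)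
  have "{x \<in> T - S. f x \<noteq> 0} = {}" using assms(2) by blast
  then show "negligible {x \<in> T - S. f x \<noteq> 0}" by (simp only: negligible_empty)
qed

lemma has_integral_uni_cell:
  fixes f :: "real \<Rightarrow> real"
  assumes "f integrable_on {a..b}" and "0 \<le> \<delta>"
  shows "(f has_integral integral {a + real k * \<delta> .. min (a + real (Suc k) * \<delta>) b} f)
    (uni_cell a b \<delta> k)"
proof -
  let ?I = "{a + real k * \<delta> .. min (a + real (Suc k) * \<delta>) b}"
  have lower: "a \<le> a + real k * \<delta>" using assms(2) by simp
  then have "?I \<subseteq> {a..b}" by auto
  then have "(f has_integral integral ?I f) ?I"
    using integrable_on_subinterval[OF assms(1)] by (simp add: integrable_integral)
  then show ?thesis
    by (rule has_integral_subset_spike[where c = "min (a + real (Suc k) * \<delta>) b"])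
      (use lower in \<open>auto simp: uni_cell_def\<close>)
qed

lemma cell_prob_eq_integral_Icc:
  assumes "f integrable_on {a..b}" and "0 \<le> \<delta>"
  shows "cell_prob f a b \<delta> k = integral {a + real k * \<delta> .. min (a + real (Suc k) * \<delta>) b} f"
  unfolding cell_prob_def using has_integral_uni_cell[OF assms] by (rule integral_unique)

lemma has_integral_cell_prob:
  assumes "f integrable_on {a..b}" and "0 \<le> \<delta>"
  shows "(f has_integral cell_prob f a b \<delta> k) (uni_cell a b \<delta> k)"
  unfolding cell_prob_eq_integral_Icc[OF assms] by (rule has_integral_uni_cell[OF assms])

lemma cell_prob_bounds:
  assumes "f integrable_on {a..b}" and f: "\<And>x. x \<in> {a..b} \<Longrightarrow> 0 \<le> f x \<and> f x \<le> M"
    and "0 \<le> M" and "0 \<le> \<delta>"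
  shows "0 \<le> cell_prob f a b \<delta> k \<and> cell_prob f a b \<delta> k \<le> M * \<delta>"
proof -
  let ?I = "{a + real k * \<delta> .. min (a + real (Suc k) * \<delta>) b}"
  have sub: "?I \<subseteq> {a..b}" using assms(4) by auto
  note p = cell_prob_eq_integral_Icc[OF assms(1,4), of k]
  have fI: "f integrable_on ?I" by (rule integrable_on_subinterval[OF assms(1) sub])
  have "0 \<le> integral ?I f" using fI f sub by (intro integral_nonneg) auto
  moreover have "integral ?I f \<le> integral ?I (\<lambda>_. M)" using fI f sub by (intro integral_le) auto
  moreover have "integral ?I (\<lambda>_. M) \<le> M * \<delta>"
  proof -
    have "min (a + real (Suc k) * \<delta>) b - (a + real k * \<delta>) \<le> \<delta>"
      by (simp add: min_def algebra_simps)
    then show ?thesis using assms(3,4) by (simp add: mult.commute mult_left_mono)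
  qed
  ultimately show ?thesis unfolding p by linarith
qed

lemma mem_uni_cell_iff:
  assumes "0 < \<delta>"
  shows "x \<in> uni_cell a b \<delta> k \<longleftrightarrow> x \<in> {a..b} \<and> \<lfloor>(x - a) / \<delta>\<rfloor> = int k"
  using assms by (auto simp: uni_cell_def floor_eq_iff field_simps)

lemma uni_cells_disjoint:
  assumes "0 < \<delta>" and "i \<noteq> j"
  shows "uni_cell a b \<delta> i \<inter> uni_cell a b \<delta> j = {}"
  using assms by (auto simp: mem_uni_cell_iff)

lemma uni_cells_cover:
  assumes "0 < \<delta>"
  shows "{a..<b} \<subseteq> (\<Union>k<uni_ncells a b \<delta>. uni_cell a b \<delta> k)"
proof
  fix x assume x: "x \<in> {a..<b}"
  define k where "k = nat \<lfloor>(x - a) / \<delta>\<rfloor>"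
  have k: "\<lfloor>(x - a) / \<delta>\<rfloor> = int k" using x assms by (simp add: k_def)
  have "(x - a) / \<delta> < (b - a) / \<delta>" using x assms by (simp add: divide_strict_right_mono)
  then have "real_of_int \<lfloor>(x - a) / \<delta>\<rfloor> < real_of_int \<lceil>(b - a) / \<delta>\<rceil>"
    using of_int_floor_le[of "(x - a) / \<delta>"] le_of_int_ceiling[of "(b - a) / \<delta>"] by linarith
  then have "int k < \<lceil>(b - a) / \<delta>\<rceil>" unfolding k[symmetric] by simp
  then have "k < uni_ncells a b \<delta>" by (simp add: uni_ncells_def)
  moreover have "x \<in> uni_cell a b \<delta> k" using x k assms by (simp add: mem_uni_cell_iff)
  ultimately show "x \<in> (\<Union>k<uni_ncells a b \<delta>. uni_cell a b \<delta> k)" by blast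
qed

lemma sum_cell_prob:
  assumes f: "(f has_integral 1) {a..b}" and \<delta>: "0 < \<delta>"
  shows "(\<Sum>k<uni_ncells a b \<delta>. cell_prob f a b \<delta> k) = 1"
proof -
  let ?U = "\<Union>k<uni_ncells a b \<delta>. uni_cell a b \<delta> k"
  have "(f has_integral (\<Sum>k<uni_ncells a b \<delta>. cell_prob f a b \<delta> k)) ?U"
  proof (rule has_integral_UN)
    show "pairwise (\<lambda>i j. negligible (uni_cell a b \<delta> i \<inter> uni_cell a b \<delta> j)) {..<uni_ncells a b \<delta>}"
      using uni_cells_disjoint[OF \<delta>] by (simp add: pairwise_def)
  qed (use f \<delta> in \<open>auto intro: has_integral_cell_prob\<close>)
  moreover have "(f has_integral 1) ?U"
  proof (rule has_integral_subset_spike[OF f])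
    show "?U \<subseteq> {a..b}" by (auto simp: uni_cell_def)
    have "{a..b} - ?U \<subseteq> {a..b} - {a..<b}" using uni_cells_cover[OF \<delta>, of a b] by blast
    also have "\<dots> \<subseteq> {b}" by auto
    finally show "{a..b} - ?U \<subseteq> {b}" .
  qed
  ultimately show ?thesis by (rule has_integral_unique)
qed

lemma uni_ncells_mult_less:
  assumes "a \<le> b" and "0 < \<delta>"
  shows "real (uni_ncells a b \<delta>) * \<delta> < b - a + \<delta>"
proof -
  have "real (uni_ncells a b \<delta>) < (b - a) / \<delta> + 1"
    using assms ceiling_correct[of "(b - a) / \<delta>"] by (simp add: uni_ncells_def)
  then show ?thesis using assms(2) by (simp add: field_simps)
qed

lemma AoI_zw_uni_shannon_minus_entropy:
  assumes "EL f a b \<delta> \<noteq> 0"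
  shows "AoI_zw_uni_shannon f a b \<delta> - 3/2 * quant_entropy f a b \<delta>
    = (EL2 f a b \<delta> - (EL f a b \<delta>)\<^sup>2) / (2 * EL f a b \<delta>)"
proof -
  have "quant_entropy f a b \<delta> = EL f a b \<delta>"
    by (simp add: quant_entropy_def EL_def shannon_len_def sum_negf)
  then show ?thesis
    using assms by (simp add: AoI_zw_uni_shannon_def field_simps power2_eq_square)
qed

lemma shannon_code_moment_bounds:
  fixes f :: "real \<Rightarrow> real"
  assumes ab: "a \<le> b" and f_int: "(f has_integral 1) {a..b}"
    and f: "\<And>x. x \<in> {a..b} \<Longrightarrow> 0 \<le> f x \<and> f x \<le> M"
    and M: "0 \<le> M" and \<delta>: "0 < \<delta>" "\<delta> \<le> 1"
  shows "- log 2 (M * \<delta>) \<le> EL f a b \<delta>"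
    and "0 \<le> EL2 f a b \<delta> - (EL f a b \<delta>)\<^sup>2"
    and "EL2 f a b \<delta> - (EL f a b \<delta>)\<^sup>2 \<le> (b - a + 1) * ((8 + 2 * M ^ 3) / (ln 2)\<^sup>2)"
proof -
  define N where "N = uni_ncells a b \<delta>"
  define p where "p = cell_prob f a b \<delta>"
  have sum_one: "sum p {..<N} = 1" unfolding p_def N_def by (rule sum_cell_prob[OF f_int \<delta>(1)])
  have p: "0 \<le> p k \<and> p k \<le> M * \<delta>" for k
    unfolding p_def using f_int f M \<delta> by (intro cell_prob_bounds) auto
  have EL: "EL f a b \<delta> = (\<Sum>k<N. p k * - log 2 (p k))"
    by (simp add: EL_def shannon_len_def N_def p_def)
  have EL2: "EL2 f a b \<delta> = (\<Sum>k<N. p k * (- log 2 (p k))\<^sup>2)"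
    by (simp add: EL2_def shannon_len_def N_def p_def)
  show "- log 2 (M * \<delta>) \<le> EL f a b \<delta>"
    unfolding EL using neg_log_max_le_entropy[OF sum_one] p by blast
  show "0 \<le> EL2 f a b \<delta> - (EL f a b \<delta>)\<^sup>2"
    unfolding EL EL2 by (intro weighted_variance_nonneg[OF sum_one]) (use p in blast)
  have "EL2 f a b \<delta> - (EL f a b \<delta>)\<^sup>2 \<le> N * \<delta> * ((8 + 2 * M ^ 3) / (ln 2)\<^sup>2)"
    unfolding EL EL2 using shannon_length_variance_le[OF sum_one _ \<delta>(1)] p by simp
  also have "\<dots> \<le> (b - a + 1) * ((8 + 2 * M ^ 3) / (ln 2)\<^sup>2)"
  proof (rule mult_right_mono)
    show "N * \<delta> \<le> b - a + 1" using uni_ncells_mult_less[OF ab \<delta>(1)] \<delta>(2) by (simp add: N_def)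
  qed (use M in simp)
  finally show "EL2 f a b \<delta> - (EL f a b \<delta>)\<^sup>2 \<le> (b - a + 1) * ((8 + 2 * M ^ 3) / (ln 2)\<^sup>2)" .
qed

lemma AoI_zw_uni_shannon_minus_entropy_bounds:
  fixes f :: "real \<Rightarrow> real"
  assumes ab: "a \<le> b" and f_int: "(f has_integral 1) {a..b}"
    and f: "\<And>x. x \<in> {a..b} \<Longrightarrow> 0 \<le> f x \<and> f x \<le> M"
    and M: "1 \<le> M" and \<delta>: "0 < \<delta>" "M * \<delta> < 1"
  shows "0 \<le> AoI_zw_uni_shannon f a b \<delta> - 3/2 * quant_entropy f a b \<delta>"
    and "AoI_zw_uni_shannon f a b \<delta> - 3/2 * quant_entropy f a b \<delta>
      \<le> (b - a + 1) * ((8 + 2 * M ^ 3) / (ln 2)\<^sup>2) / (2 * - log 2 (M * \<delta>))"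
proof -
  define K where "K = (b - a + 1) * ((8 + 2 * M ^ 3) / (ln 2)\<^sup>2)"
  have "\<delta> \<le> M * \<delta>" using M \<delta> by simp
  then obtain H: "- log 2 (M * \<delta>) \<le> EL f a b \<delta>"
    and var_nonneg: "0 \<le> EL2 f a b \<delta> - (EL f a b \<delta>)\<^sup>2"
    and var_le: "EL2 f a b \<delta> - (EL f a b \<delta>)\<^sup>2 \<le> K"
    using shannon_code_moment_bounds[OF ab f_int f _ \<delta>(1)] M \<delta>(2) unfolding K_def by auto
  have log_pos: "0 < - log 2 (M * \<delta>)" using M \<delta> by simp
  have gap: "AoI_zw_uni_shannon f a b \<delta> - 3/2 * quant_entropy f a b \<delta>
      = (EL2 f a b \<delta> - (EL f a b \<delta>)\<^sup>2) / (2 * EL f a b \<delta>)"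
    using H log_pos by (intro AoI_zw_uni_shannon_minus_entropy) linarith
  show "0 \<le> AoI_zw_uni_shannon f a b \<delta> - 3/2 * quant_entropy f a b \<delta>"
    unfolding gap using var_nonneg H log_pos by simp
  have "(EL2 f a b \<delta> - (EL f a b \<delta>)\<^sup>2) / (2 * EL f a b \<delta>) \<le> K / (2 * EL f a b \<delta>)"
    using var_le H log_pos by (intro divide_right_mono) auto
  also have "\<dots> \<le> K / (2 * - log 2 (M * \<delta>))"
    using H log_pos var_nonneg var_le by (intro divide_left_mono mult_pos_pos) auto
  finally show "AoI_zw_uni_shannon f a b \<delta> - 3/2 * quant_entropy f a b \<delta>
      \<le> (b - a + 1) * ((8 + 2 * M ^ 3) / (ln 2)\<^sup>2) / (2 * - log 2 (M * \<delta>))"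
    unfolding gap K_def .
qed

lemma neg_log_mult_at_right_0:
  fixes M :: real
  assumes "0 < M"
  shows "filterlim (\<lambda>\<delta>. - log 2 (M * \<delta>)) at_top (at_right 0)"
proof -
  have "filterlim (\<lambda>\<delta>. - ln \<delta>) at_top (at_right (0::real))"
    using ln_at_0 by (simp add: filterlim_uminus_at_top)
  then have "filterlim (\<lambda>\<delta>. inverse (ln (2::real)) * - ln \<delta>) at_top (at_right 0)"
    by (intro filterlim_tendsto_pos_mult_at_top[OF tendsto_const]) simp_all
  then have "filterlim (\<lambda>\<delta>. - log 2 M + inverse (ln 2) * - ln \<delta>) at_top (at_right 0)"
    by (rule filterlim_tendsto_add_at_top[OF tendsto_const])
  moreover have "\<forall>\<^sub>F \<delta> in at_right 0. - log 2 M + inverse (ln 2) * - ln \<delta> = - log 2 (M * \<delta>)"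
    using eventually_at_right_less[of 0]
    by eventually_elim (use assms in \<open>simp add: log_def ln_mult divide_inverse algebra_simps\<close>)
  ultimately show ?thesis by (simp add: filterlim_cong)
qed

theorem lemma3:
  fixes f :: "real \<Rightarrow> real" and a b :: real
  assumes ab: "a < b"
    and pdf_nonneg: "\<And>x. f x \<ge> 0"
    and pdf_int: "(f has_integral 1) {a..b}"
    and supp_out: "\<And>x. x \<notin> {a..b} \<Longrightarrow> f x = 0"
    and supp: "closure {x. f x > 0} = {a..b}"
    and A_cont: "continuous_on {a..b} f"
    and A_diff: "f differentiable_on {a..b}"
    and B1: "(\<lambda>x. f x * (log 2 (f x))\<^sup>2) integrable_on {a..b}"
    and B2: "(\<lambda>x. f x * log 2 (f x)) integrable_on {a..b}"
  shows "((\<lambda>\<delta>. AoI_zw_uni_shannon f a b \<delta> - 3/2 * quant_entropy f a b \<delta>)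
           \<longlongrightarrow> 0) (at_right 0)"
proof -
  obtain x0 where x0: "\<forall>x\<in>{a..b}. f x \<le> f x0"
    using continuous_attains_sup[OF compact_Icc _ A_cont] ab by auto
  define M where "M = max 1 (f x0)"
  define C where "C = (b - a + 1) * ((8 + 2 * M ^ 3) / (ln 2)\<^sup>2)"
  have M: "1 \<le> M" and f_bounds: "\<And>x. x \<in> {a..b} \<Longrightarrow> 0 \<le> f x \<and> f x \<le> M"
    using pdf_nonneg x0 by (force simp: M_def)+
  have "\<forall>\<^sub>F \<delta> in at_right 0. 0 < \<delta> \<and> M * \<delta> < 1"
    using eventually_at_right_real[of 0 "1 / M"] M by (simp add: field_simps)
  then have "\<forall>\<^sub>F \<delta> in at_right 0.
      0 \<le> AoI_zw_uni_shannon f a b \<delta> - 3/2 * quant_entropy f a b \<delta>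
      \<and> AoI_zw_uni_shannon f a b \<delta> - 3/2 * quant_entropy f a b \<delta> \<le> C / (2 * - log 2 (M * \<delta>))"
    by eventually_elim
      (use AoI_zw_uni_shannon_minus_entropy_bounds[OF _ pdf_int f_bounds M] ab in \<open>simp add: C_def\<close>)
  then have lower: "\<forall>\<^sub>F \<delta> in at_right 0. 0 \<le> AoI_zw_uni_shannon f a b \<delta> - 3/2 * quant_entropy f a b \<delta>"
    and upper: "\<forall>\<^sub>F \<delta> in at_right 0.
      AoI_zw_uni_shannon f a b \<delta> - 3/2 * quant_entropy f a b \<delta> \<le> C / (2 * - log 2 (M * \<delta>))"
    by (auto simp: eventually_conj_iff)
  have "filterlim (\<lambda>\<delta>. 2 * - log 2 (M * \<delta>)) at_top (at_right 0)"
    using M by (intro filterlim_tendsto_pos_mult_at_top[OF tendsto_const] neg_log_mult_at_right_0) auto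
  then have "((\<lambda>\<delta>. C / (2 * - log 2 (M * \<delta>))) \<longlongrightarrow> 0) (at_right 0)"
    by (intro tendsto_divide_0[OF tendsto_const] filterlim_at_top_imp_at_infinity)
  then show ?thesis
    by (rule tendsto_sandwich[OF lower upper tendsto_const])
qed

end
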